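(* Let $\sigma$ be a completely erasing $k$-block substitution with $w_\epsilon\ne1^k$ that satisfies the optimality condition. Then for every $p\in\mathbb N$ the set $\mathcal P_p$ of $f_\sigma$-periodic points of period $p$ is uncountable, and the set $\mathcal P=\bigcup_{p\in\mathbb N}\mathcal P_p$ of all $f_\sigma$-periodic points is dense in $\mathbb I$.
   Context: Notation: $\mathbb I=[0,1]$. $\{0,1\}^*$ and $\{0,1\}^\omega$ denote finite and infinite binary words, and $\epsilon$ is the empty word. For a word $w$, set $0.w=\sum_iw_i2^{-i}$. For $x\in(0,1]$, $\widetilde x$ is the unique infinite binary expansion of $x$ not ending in $0^\infty$. Fix $k\ge2$. An erasing $k$-block substitution is a map $\sigma:\{0,1\}^k\to\{0,1\}^*$ with exactly one block $w_\epsilon$ such that $\sigma(w_\epsilon)=\epsilon$. $\sigma$ is alternating if there are $\sigma_1,\dots,\sigma_k:\{0,1\}\to\{0,1\}^*$ with $\sigma(b_1\cdots b_k)=\sigma_1(b_1)\cdots\sigma_k(b_k)$. It is then extended to all finite or infinite words by $\sigma(u)=\prod_j\sigma_{((j-1)\bmod k)+1}(u_j)$. $\sigma$ is completely erasing if it is erasing and alternating, and every $w\in\{0,1\}^*$ satisfies $\sigma^n(w)=\epsilon$ for some $n\in\mathbb N$. The map $f_\sigma:\mathbb I\to\mathbb I$ is defined by $f_\sigma(x)=0.\sigma(\widetilde x)$ if $x\in(0,1]$ and $\widetilde x\neq w_\epsilon^\infty$, and $f_\sigma(x)=0$ otherwise. Optimality condition: every $w\in\{0,1\}^\omega$ can be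 written as $w=\prod_{i\ge1}\sigma(b_i)$ with blocks $b_i\in\{0,1\}^k$ satisfying $\sigma(b_i)\ne\epsilon$. *)

theory Defs
  imports "HOL-Analysis.Analysis"
begin

(* Binary words: finite words are bool lists (True = 1, False = 0);
   infinite words are functions nat => bool, position 0 is the first letter.
   An alternating k-block substitution is given by its components
   s 0, ..., s (k-1) :: bool => bool list  (paper's sigma_1,...,sigma_k). *)

definition sigma_word :: "nat \<Rightarrow> (nat \<Rightarrow> bool \<Rightarrow> bool list) \<Rightarrow> bool list \<Rightarrow> bool list" where
  "sigma_word k s u = concat (map (\<lambda>j. s (j mod k) (u ! j)) [0..<length u])"

definition blocks :: "nat \<Rightarrow> bool list set" where
  "blocks k = {b. length b = k}"

definition erasing :: "nat \<Rightarrow> (nat \<Rightarrow> bool \<Rightarrow> bool list) \<Rightarrow> bool" where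
  "erasing k s \<longleftrightarrow> (\<exists>!b. b \<in> blocks k \<and> sigma_word k s b = [])"

definition w_eps :: "nat \<Rightarrow> (nat \<Rightarrow> bool \<Rightarrow> bool list) \<Rightarrow> bool list" where
  "w_eps k s = (THE b. b \<in> blocks k \<and> sigma_word k s b = [])"

definition completely_erasing :: "nat \<Rightarrow> (nat \<Rightarrow> bool \<Rightarrow> bool list) \<Rightarrow> bool" where
  "completely_erasing k s \<longleftrightarrow> erasing k s \<and> (\<forall>w. \<exists>n. (sigma_word k s ^^ n) w = [])"

definition fin_val :: "bool list \<Rightarrow> real" where
  "fin_val u = (\<Sum>i<length u. if u ! i then (1/2) ^ Suc i else 0)"

definition bin_val :: "(nat \<Rightarrow> bool) \<Rightarrow> real" where
  "bin_val w = (\<Sum>i. if w i then (1/2) ^ Suc i else 0)"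

(* 0.(U 0 U 1 U 2 ...) for the (finite or infinite) concatenation of finite words *)
definition concat_val :: "(nat \<Rightarrow> bool list) \<Rightarrow> real" where
  "concat_val U = (\<Sum>j. (1/2) ^ length (concat (map U [0..<j])) * fin_val (U j))"

definition tilde :: "real \<Rightarrow> (nat \<Rightarrow> bool)" where
  "tilde x = (THE w. bin_val w = x \<and> (\<exists>\<^sub>\<infinity>i. w i))"

(* sigma applied to an infinite word, as a sequence of finite words to be concatenated *)
definition sigma_inf :: "nat \<Rightarrow> (nat \<Rightarrow> bool \<Rightarrow> bool list) \<Rightarrow> (nat \<Rightarrow> bool) \<Rightarrow> nat \<Rightarrow> bool list" where
  "sigma_inf k s w = (\<lambda>j. s (j mod k) (w j))"

definition f_sigma :: "nat \<Rightarrow> (nat \<Rightarrow> bool \<Rightarrow> bool list) \<Rightarrow> real \<Rightarrow> real" where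
  "f_sigma k s x =
     (if 0 < x \<and> x \<le> 1 \<and> tilde x \<noteq> (\<lambda>i. w_eps k s ! (i mod k))
      then concat_val (sigma_inf k s (tilde x)) else 0)"

(* every infinite word is a concatenation of non-erased images of blocks *)
definition optimal :: "nat \<Rightarrow> (nat \<Rightarrow> bool \<Rightarrow> bool list) \<Rightarrow> bool" where
  "optimal k s \<longleftrightarrow> (\<forall>w :: nat \<Rightarrow> bool. \<exists>b :: nat \<Rightarrow> bool list.
     (\<forall>i. b i \<in> blocks k \<and> sigma_word k s (b i) \<noteq> []) \<and>
     (\<forall>n. w n = concat (map (\<lambda>i. sigma_word k s (b i)) [0..<Suc n]) ! n))"

definition periodic_points :: "(real \<Rightarrow> real) \<Rightarrow> nat \<Rightarrow> real set" where
  "periodic_points f p = {x \<in> {0..1}. (f ^^ p) x = x \<and> (\<forall>q. 0 < q \<and> q < p \<longrightarrow> (f ^^ q) x \<noteq> x)}"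

end

theory Submission
  imports Defs
begin

text \<open>For a period \<open>p\<close> one builds infinite words \<open>W\<^sub>0, \<dots>, W\<^sub>p\<^sub>-\<^sub>1\<close> with
  \<open>\<sigma>(W\<^sub>j\<^sub>+\<^sub>1) = W\<^sub>j\<close> (indices mod \<open>p\<close>), so that \<open>0.W\<^sub>0\<close> returns to itself after \<open>p\<close> steps
  of \<open>f\<^sub>\<sigma>\<close>. The words grow in stages: each \<open>W\<^sub>j\<close> receives a run of copies of \<open>w\<^sub>\<epsilon>\<close>, which \<open>\<sigma>\<close>
  erases, followed by one block whose image continues \<open>W\<^sub>j\<^sub>-\<^sub>1\<close>; optimality supplies such a
  block once the run is long enough, and these blocks keep the words from ending in \<open>0\<^sup>\<omega>\<close>
  or \<open>w\<^sub>\<epsilon>\<^sup>\<omega>\<close>. One optional extra copy of \<open>w\<^sub>\<epsilon>\<close> in \<open>W\<^sub>0\<close> at each stage encodes a bit,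
  which yields injectively a periodic point for every infinite binary sequence; runs of
  different lengths at the start make \<open>p\<close> the least period. For density one starts instead
  from \<open>W\<^sub>0 = u\<close>, an arbitrary finite prefix, and \<open>W\<^sub>j = \<sigma>\<^sup>p\<^sup>-\<^sup>j(u)\<close> padded to whole blocks,
  choosing \<open>p\<close> so large that complete erasure makes \<open>\<sigma>\<^sup>p(u)\<close> empty.\<close>

lemma uncountable_UNIV_nat_bool: "uncountable (UNIV :: (nat \<Rightarrow> bool) set)"
proof
  assume "countable (UNIV :: (nat \<Rightarrow> bool) set)"
  then obtain f :: "nat \<Rightarrow> nat \<Rightarrow> bool" where "range f = UNIV"
    by (metis uncountable_def UNIV_not_empty)
  then obtain n where "f n = (\<lambda>m. \<not> f m m)"
    by (metis UNIV_I imageE)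
  then show False
    by metis
qed

lemma fin_val_snoc: "fin_val (u @ [b]) = fin_val u + (if b then (1/2) ^ Suc (length u) else 0)"
  unfolding fin_val_def by (simp add: nth_append)

lemma fin_val_append: "fin_val (u @ v) = fin_val u + (1/2) ^ length u * fin_val v"
proof (induction v rule: rev_induct)
  case Nil
  then show ?case by (simp add: fin_val_def)
next
  case (snoc b v)
  then show ?case
    using fin_val_snoc[of "u @ v" b] by (simp add: fin_val_snoc power_add algebra_simps)
qed

lemma fin_val_approx:
  assumes "0 \<le> y" "y \<le> 1"
  shows "\<exists>u. length u = N \<and> fin_val u \<le> y \<and> y \<le> fin_val u + (1/2) ^ N"
proof (induction N)
  case 0
  then show ?case using assms by (simp add: fin_val_def)
next
  case (Suc N)
  then obtain u where u: "length u = N" "fin_val u \<le> y" "y \<le> fin_val u + (1/2) ^ N"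
    by blast
  let ?b = "fin_val u + (1/2) ^ Suc N \<le> y"
  have "fin_val (u @ [?b]) = fin_val u + (if ?b then (1/2) ^ Suc N else 0)"
    using u(1) by (simp add: fin_val_snoc)
  then show ?case
    using u by (intro exI[of _ "u @ [?b]"]) auto
qed

lemma summable_bin_digits: "summable (\<lambda>i. if w i then (1/2::real) ^ Suc i else 0)"
  by (rule summable_comparison_test'[where g = "\<lambda>i. (1/2) ^ Suc i"]) auto

lemma bin_val_nonneg: "0 \<le> bin_val w"
  unfolding bin_val_def by (rule suminf_nonneg[OF summable_bin_digits]) auto

lemma bin_val_le_one: "bin_val w \<le> 1"
proof -
  have "bin_val w \<le> (\<Sum>i. (1/2::real) ^ Suc i)"
    unfolding bin_val_def by (rule suminf_le[OF _ summable_bin_digits]) auto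
  also have "\<dots> = 1"
    using suminf_geometric[of "1/2::real"] suminf_mult[of "\<lambda>i. (1/2::real) ^ i" "1/2"] by simp
  finally show ?thesis .
qed

lemma bin_val_pos: "w i \<Longrightarrow> 0 < bin_val w"
proof -
  assume "w i"
  then have "(1/2::real) ^ Suc i \<le> bin_val w"
    using sum_le_suminf[OF summable_bin_digits, of "{i}" w] unfolding bin_val_def by simp
  then show ?thesis
    using zero_less_power[of "1/2::real" "Suc i"] by linarith
qed

lemma bin_val_split: "bin_val w = fin_val (map w [0..<N]) + (1/2) ^ N * bin_val (\<lambda>i. w (i + N))"
proof -
  have "bin_val w = (\<Sum>i. if w (i + N) then (1/2::real) ^ Suc (i + N) else 0)
      + (\<Sum>i<N. if w i then (1/2) ^ Suc i else 0)"
    unfolding bin_val_def using suminf_split_initial_segment[OF summable_bin_digits, of w N] by simp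
  also have "(\<Sum>i. if w (i + N) then (1/2::real) ^ Suc (i + N) else 0)
      = (\<Sum>i. (1/2) ^ N * (if w (i + N) then (1/2) ^ Suc i else 0))"
    by (rule suminf_cong) (simp add: power_add)
  finally show ?thesis
    unfolding bin_val_def fin_val_def suminf_mult[OF summable_bin_digits] by simp
qed

lemma dist_bin_val_le:
  assumes "map w [0..<N] = u" "fin_val u \<le> y" "y \<le> fin_val u + (1/2) ^ N"
  shows "dist (bin_val w) y \<le> (1/2) ^ N"
proof -
  have "bin_val w = fin_val u + (1/2) ^ N * bin_val (\<lambda>i. w (i + N))"
    using bin_val_split[of w N] assms(1) by simp
  moreover have "0 \<le> (1/2::real) ^ N * bin_val (\<lambda>i. w (i + N))"
    using bin_val_nonneg by simp
  moreover have "(1/2::real) ^ N * bin_val (\<lambda>i. w (i + N)) \<le> (1/2) ^ N"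
    by (rule mult_left_le[OF bin_val_le_one]) simp
  ultimately show ?thesis
    using assms(2,3) unfolding dist_real_def abs_le_iff by (intro conjI) linarith+
qed

lemma bin_val_less:
  assumes "\<forall>m<n. a m = b m" "\<not> a n" "b n" "\<exists>\<^sub>\<infinity>i. b i"
  shows "bin_val a < bin_val b"
proof -
  let ?h = "(1/2::real) ^ Suc n"
  obtain i where "i > n" "b i"
    using assms(4) unfolding INFM_nat by blast
  then have "0 < bin_val (\<lambda>i. b (i + Suc n))"
    by (intro bin_val_pos[of _ "i - Suc n"]) simp
  then have "0 < ?h * bin_val (\<lambda>i. b (i + Suc n))"
    by simp
  moreover have "?h * bin_val (\<lambda>i. a (i + Suc n)) \<le> ?h"
    by (rule mult_left_le[OF bin_val_le_one]) simp
  moreover have "fin_val (map a [0..<n]) = fin_val (map b [0..<n])"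
    using assms(1) by (intro arg_cong[where f = fin_val] map_cong) auto
  moreover have "bin_val a = fin_val (map a [0..<n]) + ?h * bin_val (\<lambda>i. a (i + Suc n))"
    using bin_val_split[of a "Suc n"] assms(2) by (simp only: upt_Suc_append) (simp add: fin_val_snoc)
  moreover have "bin_val b = fin_val (map b [0..<n]) + ?h + ?h * bin_val (\<lambda>i. b (i + Suc n))"
    using bin_val_split[of b "Suc n"] assms(3) by (simp only: upt_Suc_append) (simp add: fin_val_snoc)
  ultimately show ?thesis
    by linarith
qed

lemma bin_val_inj:
  assumes "\<exists>\<^sub>\<infinity>i. v i" "\<exists>\<^sub>\<infinity>i. w i" "bin_val v = bin_val w"
  shows "v = w"
proof (rule ccontr)
  assume "v \<noteq> w"
  then obtain n where n: "v n \<noteq> w n" "\<forall>m<n. v m = w m"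
    using exists_least_iff[of "\<lambda>n. v n \<noteq> w n"] by (auto simp: fun_eq_iff)
  then have "bin_val v < bin_val w \<or> bin_val w < bin_val v"
    using bin_val_less[of n v w] bin_val_less[of n w v] assms(1,2) by (cases "w n") auto
  then show False
    using assms(3) by simp
qed

lemma tilde_bin_val: "\<exists>\<^sub>\<infinity>i. w i \<Longrightarrow> tilde (bin_val w) = w"
  unfolding tilde_def by (rule the_equality) (auto intro: bin_val_inj)

text \<open>The partial sums of \<open>concat_val U\<close> are the values of longer and longer prefixes of \<open>w\<close>.\<close>

lemma concat_val_eq_bin_val:
  assumes prefix: "\<And>n i. i < length (concat (map U [0..<n])) \<Longrightarrow> concat (map U [0..<n]) ! i = w i"
    and unbounded: "\<And>N. \<exists>n. N \<le> length (concat (map U [0..<n]))"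
  shows "concat_val U = bin_val w"
proof -
  define c where "c n = concat (map U [0..<n])" for n
  have partial_sums: "(\<Sum>j<n. (1/2) ^ length (c j) * fin_val (U j)) = fin_val (c n)" for n
  proof (induction n)
    case (Suc n)
    have "c (Suc n) = c n @ U n"
      by (simp add: c_def)
    then show ?case
      using Suc by (simp add: fin_val_append)
  qed (simp add: c_def fin_val_def)
  define F where "F N = (\<Sum>i<N. if w i then (1/2::real) ^ Suc i else 0)" for N
  have "F \<longlonglongrightarrow> bin_val w"
    unfolding F_def bin_val_def using summable_LIMSEQ[OF summable_bin_digits] by blast
  moreover have "filterlim (\<lambda>n. length (c n)) at_top sequentially"
    unfolding filterlim_at_top eventually_sequentially
  proof
    fix N
    obtain n0 where "N \<le> length (c n0)"
      using unbounded unfolding c_def by blast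
    moreover have "length (c n0) \<le> length (c n)" if "n0 \<le> n" for n
      using that upt_add_eq_append[of 0 n0 "n - n0"] by (simp add: c_def)
    ultimately show "\<exists>n0. \<forall>n\<ge>n0. N \<le> length (c n)"
      using le_trans by blast
  qed
  ultimately have "(\<lambda>n. F (length (c n))) \<longlonglongrightarrow> bin_val w"
    by (rule filterlim_compose)
  moreover have "F (length (c n)) = fin_val (c n)" for n
    unfolding fin_val_def F_def using prefix by (simp add: c_def)
  ultimately have "(\<lambda>j. (1/2) ^ length (c j) * fin_val (U j)) sums bin_val w"
    unfolding sums_def partial_sums by simp
  then show ?thesis
    unfolding concat_val_def c_def by (simp add: sums_iff)
qed

lemma sigma_word_Nil [simp]: "sigma_word k s [] = []"
  by (simp add: sigma_word_def)

lemma sigma_word_append: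
  "sigma_word k s (a @ b) = sigma_word k s a @
     concat (map (\<lambda>j. s ((j + length a) mod k) (b ! j)) [0..<length b])"
proof -
  have "[0..<length a + length b] = [0..<length a] @ map (\<lambda>j. j + length a) [0..<length b]"
    using upt_add_eq_append[of 0 "length a" "length b"] map_add_upt[of "length a" "length b"]
    by (simp add: add.commute)
  moreover have "map (\<lambda>j. s (j mod k) ((a @ b) ! j)) [0..<length a]
      = map (\<lambda>j. s (j mod k) (a ! j)) [0..<length a]"
    by (rule map_cong) (auto simp: nth_append)
  moreover have "map ((\<lambda>j. s (j mod k) ((a @ b) ! j)) \<circ> (\<lambda>j. j + length a)) [0..<length b]
      = map (\<lambda>j. s ((j + length a) mod k) (b ! j)) [0..<length b]"
    by (auto simp: nth_append)
  ultimately show ?thesis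
    unfolding sigma_word_def length_append by (simp only: map_append concat_append map_map)
qed

lemma sigma_word_append_aligned:
  "k dvd length a \<Longrightarrow> sigma_word k s (a @ b) = sigma_word k s a @ sigma_word k s b"
  unfolding sigma_word_append by (simp add: sigma_word_def mod_add_right_eq[symmetric])

lemma sigma_word_take_prefix: "\<exists>t. sigma_word k s u = sigma_word k s (take n u) @ t"
  using sigma_word_append[of k s "take n u" "drop n u"] by (metis append_take_drop_id)

lemma concat_sigma_inf: "concat (map (sigma_inf k s w) [0..<n]) = sigma_word k s (map w [0..<n])"
  unfolding sigma_word_def sigma_inf_def by (intro arg_cong[where f = concat] map_cong) auto

definition image_bound :: "nat \<Rightarrow> (nat \<Rightarrow> bool \<Rightarrow> bool list) \<Rightarrow> nat" where
  "image_bound k s = (\<Sum>j<k. length (s j True) + length (s j False))"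

lemma length_sigma_word_block_le:
  assumes "b \<in> blocks k"
  shows "length (sigma_word k s b) \<le> image_bound k s"
proof -
  have "length (sigma_word k s b) = (\<Sum>j<k. length (s j (b ! j)))"
    using assms unfolding sigma_word_def blocks_def
    by (simp add: length_concat comp_def sum_list_sum_nth atLeast0LessThan)
  also have "\<dots> \<le> image_bound k s"
    unfolding image_bound_def by (intro sum_mono) (metis (full_types) le_add1 le_add2)
  finally show ?thesis .
qed

locale erasing_substitution =
  fixes k :: nat and s :: "nat \<Rightarrow> bool \<Rightarrow> bool list"
  assumes k_pos: "0 < k" and erasing: "erasing k s"
begin

abbreviation \<sigma> :: "bool list \<Rightarrow> bool list" where
  "\<sigma> \<equiv> sigma_word k s"

lemma w_eps_block: "w_eps k s \<in> blocks k" and sigma_w_eps [simp]: "\<sigma> (w_eps k s) = []"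
  using theI'[OF erasing[unfolded erasing_def]] unfolding w_eps_def by auto

lemma length_w_eps [simp]: "length (w_eps k s) = k"
  using w_eps_block by (simp add: blocks_def)

lemma s_w_eps_nth: "j < k \<Longrightarrow> s j (w_eps k s ! j) = []"
  using sigma_w_eps unfolding sigma_word_def by simp

definition erased_word :: "nat \<Rightarrow> bool list" where
  "erased_word m = concat (replicate m (w_eps k s))"

lemma length_erased_word [simp]: "length (erased_word m) = k * m"
  unfolding erased_word_def by (induction m) auto

lemma erased_word_add: "erased_word (m + n) = erased_word m @ erased_word n"
  unfolding erased_word_def by (simp add: replicate_add)

lemma sigma_erased_word [simp]: "\<sigma> (erased_word m) = []"
  by (induction m) (simp_all add: erased_word_def sigma_word_append_aligned)

lemma nth_erased_word: "i < k * m \<Longrightarrow> erased_word m ! i = w_eps k s ! (i mod k)"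
proof (induction m arbitrary: i)
  case (Suc m)
  have "erased_word (Suc m) = w_eps k s @ erased_word m"
    by (simp add: erased_word_def)
  then show ?case
    using Suc by (cases "i < k") (simp_all add: nth_append le_mod_geq)
qed simp

definition pad :: "bool list \<Rightarrow> bool list" where
  "pad v = v @ drop (length v mod k) (w_eps k s)"

lemma k_dvd_length_pad: "k dvd length (pad v)"
proof -
  have "length v mod k \<le> k"
    using k_pos by (simp add: less_imp_le)
  then have "length (pad v) = length v - length v mod k + k"
    unfolding pad_def using mod_less_eq_dividend[of "length v" k] by simp
  also have "\<dots> = k * (length v div k) + k"
    by (simp add: minus_mod_eq_mult_div)
  finally show ?thesis
    by simp
qed

text \<open>The padding occupies the positions of the tail of \<open>w_eps k s\<close> modulo \<open>k\<close>, so it is erased.\<close>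

lemma sigma_pad: "\<sigma> (pad v) = \<sigma> v"
proof -
  let ?r = "length v mod k"
  have "s ((j + length v) mod k) (drop ?r (w_eps k s) ! j) = []" if "j < k - ?r" for j
  proof -
    have "(j + length v) mod k = ?r + j"
      using that by (simp add: mod_add_right_eq[symmetric, of j "length v"])
    then show ?thesis
      using that s_w_eps_nth[of "?r + j"] by simp
  qed
  then show ?thesis
    unfolding pad_def sigma_word_append by simp
qed

end

locale optimal_erasing_substitution = erasing_substitution +
  assumes optimal: "optimal k s"
begin

lemma exists_block_image_prefix:
  assumes "image_bound k s \<le> length v"
  shows "\<exists>b. b \<in> blocks k \<and> \<sigma> b \<noteq> [] \<and> (\<exists>t. v = \<sigma> b @ t)"
proof -
  define w where "w n = (n < length v \<and> v ! n)" for n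
  obtain bs where bs: "\<forall>i. bs i \<in> blocks k \<and> \<sigma> (bs i) \<noteq> []"
    and expansion: "\<forall>n. w n = concat (map (\<lambda>i. \<sigma> (bs i)) [0..<Suc n]) ! n"
    using optimal unfolding optimal_def by blast
  let ?c = "\<sigma> (bs 0)"
  have c_le: "length ?c \<le> length v"
    using length_sigma_word_block_le[of "bs 0" k s] bs assms by fastforce
  have "?c ! n = v ! n" if "n < length ?c" for n
  proof -
    have "concat (map (\<lambda>i. \<sigma> (bs i)) [0..<Suc n]) ! n = ?c ! n"
      using that by (simp add: upt_rec nth_append)
    then show ?thesis
      using expansion that c_le unfolding w_def by (metis less_le_trans)
  qed
  then have "take (length ?c) v = ?c"
    using c_le by (intro nth_equalityI) auto
  then show ?thesis
    using bs by (metis append_take_drop_id)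
qed

lemma image_bound_pos: "0 < image_bound k s"
proof (rule ccontr)
  assume "\<not> 0 < image_bound k s"
  then obtain b where "b \<in> blocks k" "\<sigma> b \<noteq> []"
    using exists_block_image_prefix[of "[]"] by auto
  then show False
    using length_sigma_word_block_le[of b k s] \<open>\<not> 0 < image_bound k s\<close> by simp
qed

definition head_block :: "bool list \<Rightarrow> bool list" where
  "head_block v = (SOME b. b \<in> blocks k \<and> \<sigma> b \<noteq> [] \<and> (\<exists>t. v = \<sigma> b @ t))"

lemma head_block:
  assumes "image_bound k s \<le> length v"
  shows "head_block v \<in> blocks k" "\<sigma> (head_block v) \<noteq> []" "\<exists>t. v = \<sigma> (head_block v) @ t"
  using someI_ex[OF exists_block_image_prefix[OF assms]] unfolding head_block_def by blast+

end

lemma funpow_cycle: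
  assumes "0 < p" and step: "\<And>j. j < p \<Longrightarrow> f (x (Suc j mod p)) = x j"
  shows "(f ^^ q) (x ((m + q) mod p)) = x (m mod p)"
proof (induction q arbitrary: m)
  case (Suc q)
  have "(f ^^ Suc q) (x ((m + Suc q) mod p)) = f (x (Suc m mod p))"
    using Suc.IH[of "Suc m"] by simp
  also have "\<dots> = f (x (Suc (m mod p) mod p))"
    by (simp add: mod_Suc_eq)
  also have "\<dots> = x (m mod p)"
    using step assms(1) by simp
  finally show ?case .
qed simp

lemma periodic_points_least_period:
  assumes "x \<in> {0..1}" "0 < p" "(f ^^ p) x = x"
  shows "x \<in> (\<Union>q\<in>{1..}. periodic_points f q)"
proof -
  obtain q where q: "0 < q \<and> (f ^^ q) x = x" "\<forall>q'<q. \<not> (0 < q' \<and> (f ^^ q') x = x)"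
    using exists_least_iff[of "\<lambda>q. 0 < q \<and> (f ^^ q) x = x"] assms(2,3) by blast
  then have "x \<in> periodic_points f q"
    using assms(1) unfolding periodic_points_def by blast
  then show ?thesis
    using q(1) by force
qed

lemma mod_pred_Suc_mod: "j < (p::nat) \<Longrightarrow> (Suc j mod p + p - 1) mod p = j"
proof (cases "Suc j < p")
  case False
  moreover assume "j < p"
  ultimately have "p = Suc j"
    by simp
  then show ?thesis
    by simp
qed simp

locale periodic_orbit_construction = optimal_erasing_substitution +
  fixes p :: nat
  assumes p_pos: "0 < p"
begin

text \<open>Finite approximations of infinite words \<open>W 0, \<dots>, W (p - 1)\<close> with \<open>\<sigma> (W (j + 1 mod p)) = W j\<close>.\<close>

definition cyclic_chain :: "(nat \<Rightarrow> bool list) \<Rightarrow> bool" where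
  "cyclic_chain X \<longleftrightarrow> (\<forall>j<p. k dvd length (X j) \<and> (\<exists>r. X j = \<sigma> (X (Suc j mod p)) @ r))"

text \<open>A gap of at least \<open>image_bound k s\<close> erased blocks makes the leftover long enough to
  contain the image of a block; the optional extra block at \<open>j = 0\<close> encodes one bit.\<close>

definition gap :: "bool \<Rightarrow> nat \<Rightarrow> nat" where
  "gap b j = image_bound k s + (if j = 0 \<and> b then 1 else 0)"

definition leftover :: "bool \<Rightarrow> (nat \<Rightarrow> bool list) \<Rightarrow> nat \<Rightarrow> bool list" where
  "leftover b X j = drop (length (\<sigma> (X (Suc j mod p)))) (X j) @ erased_word (gap b j)"

definition new_block :: "bool \<Rightarrow> (nat \<Rightarrow> bool list) \<Rightarrow> nat \<Rightarrow> bool list" where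
  "new_block b X j = head_block (leftover b X ((j + p - 1) mod p))"

definition extend :: "bool \<Rightarrow> (nat \<Rightarrow> bool list) \<Rightarrow> nat \<Rightarrow> bool list" where
  "extend b X j = X j @ erased_word (gap b j) @ new_block b X j"

primrec stage :: "(nat \<Rightarrow> bool) \<Rightarrow> (nat \<Rightarrow> bool list) \<Rightarrow> nat \<Rightarrow> nat \<Rightarrow> bool list" where
  "stage \<beta> X 0 = X"
| "stage \<beta> X (Suc n) = extend (\<beta> n) (stage \<beta> X n)"

definition limit :: "(nat \<Rightarrow> bool) \<Rightarrow> (nat \<Rightarrow> bool list) \<Rightarrow> nat \<Rightarrow> nat \<Rightarrow> bool" where
  "limit \<beta> X j i = stage \<beta> X (Suc i) j ! i"

lemma length_leftover: "image_bound k s \<le> length (leftover b X j)"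
proof -
  have "image_bound k s \<le> gap b j"
    by (simp add: gap_def)
  also have "\<dots> \<le> k * gap b j"
    using k_pos by simp
  finally show ?thesis
    by (simp add: leftover_def)
qed

lemma new_block:
  "new_block b X j \<in> blocks k" "\<sigma> (new_block b X j) \<noteq> []"
  "\<exists>t. leftover b X ((j + p - 1) mod p) = \<sigma> (new_block b X j) @ t"
  unfolding new_block_def using head_block[OF length_leftover] by auto

lemma length_new_block [simp]: "length (new_block b X j) = k"
  using new_block(1) by (simp add: blocks_def)

lemma new_block_differs: "\<exists>t<k. new_block b X j ! t \<noteq> w_eps k s ! t"
proof (rule ccontr)
  assume "\<not> ?thesis"
  then have "new_block b X j = w_eps k s"
    by (intro nth_equalityI) auto
  then show False
    using new_block(2)[of b X j] by simp
qed

lemma length_extend: "length (extend b X j) = length (X j) + k * gap b j + k"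
  by (simp add: extend_def)

lemma sigma_extend: "k dvd length (X j) \<Longrightarrow> \<sigma> (extend b X j) = \<sigma> (X j) @ \<sigma> (new_block b X j)"
  unfolding extend_def by (simp add: sigma_word_append_aligned)

text \<open>The erased run adds nothing to \<open>\<sigma> (X j)\<close>, and the image of the new block is exactly what
  \<open>X (j - 1)\<close> needs next.\<close>

lemma cyclic_chain_extend:
  assumes "cyclic_chain X"
  shows "cyclic_chain (extend b X)"
  unfolding cyclic_chain_def
proof (intro allI impI conjI)
  fix j
  assume j: "j < p"
  define j' where "j' = Suc j mod p"
  have j': "j' < p"
    using p_pos by (simp add: j'_def)
  show "k dvd length (extend b X j)"
    using assms j by (simp add: cyclic_chain_def length_extend)
  obtain r where r: "X j = \<sigma> (X j') @ r"
    using assms j unfolding cyclic_chain_def j'_def by blast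
  have "(j' + p - 1) mod p = j"
    using mod_pred_Suc_mod[OF j] by (simp add: j'_def)
  moreover have "leftover b X j = r @ erased_word (gap b j)"
    using r by (simp add: leftover_def j'_def)
  ultimately obtain t where t: "r @ erased_word (gap b j) = \<sigma> (new_block b X j') @ t"
    using new_block(3)[of b X j'] by auto
  have "\<sigma> (extend b X j') = \<sigma> (X j') @ \<sigma> (new_block b X j')"
    using assms j' by (simp add: cyclic_chain_def sigma_extend)
  then have "extend b X j = \<sigma> (extend b X j') @ t @ new_block b X j"
    using r t by (simp add: extend_def)
  then show "\<exists>r. extend b X j = \<sigma> (extend b X (Suc j mod p)) @ r"
    unfolding j'_def by blast
qed

lemma cyclic_chain_stage: "cyclic_chain X \<Longrightarrow> cyclic_chain (stage \<beta> X n)"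
  by (induction n) (simp_all add: cyclic_chain_extend)

lemma stage_prefix: "n \<le> m \<Longrightarrow> \<exists>t. stage \<beta> X m j = stage \<beta> X n j @ t"
proof (induction m)
  case (Suc m)
  then show ?case
    by (cases "n = Suc m") (force simp: extend_def le_Suc_eq)+
qed simp

lemma length_stage: "length (X j) + n \<le> length (stage \<beta> X n j)"
  using k_pos by (induction n) (simp_all add: length_extend)

lemma length_sigma_stage:
  assumes "cyclic_chain X" "j < p"
  shows "n \<le> length (\<sigma> (stage \<beta> X n j))"
proof (induction n)
  case (Suc n)
  have "k dvd length (stage \<beta> X n j)"
    using cyclic_chain_stage[OF assms(1)] assms(2) by (simp add: cyclic_chain_def)
  then have "length (\<sigma> (stage \<beta> X (Suc n) j))
      = length (\<sigma> (stage \<beta> X n j)) + length (\<sigma> (new_block (\<beta> n) (stage \<beta> X n) j))"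
    by (simp add: sigma_extend)
  moreover have "0 < length (\<sigma> (new_block (\<beta> n) (stage \<beta> X n) j))"
    using new_block(2) by blast
  ultimately show ?case
    using Suc by linarith
qed simp

lemma limit_eq_nth: "i < length (stage \<beta> X n j) \<Longrightarrow> limit \<beta> X j i = stage \<beta> X n j ! i"
proof -
  assume i: "i < length (stage \<beta> X n j)"
  obtain t1 where t1: "stage \<beta> X (max n (Suc i)) j = stage \<beta> X n j @ t1"
    using stage_prefix[of n "max n (Suc i)" \<beta> X j] by auto
  obtain t2 where t2: "stage \<beta> X (max n (Suc i)) j = stage \<beta> X (Suc i) j @ t2"
    using stage_prefix[of "Suc i" "max n (Suc i)" \<beta> X j] by auto
  have "i < length (stage \<beta> X (Suc i) j)"
    using length_stage[of X j "Suc i" \<beta>] by linarith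
  then show ?thesis
    using i t1 t2 unfolding limit_def by (metis nth_append)
qed

lemma map_limit: "n \<le> length (stage \<beta> X m j) \<Longrightarrow> map (limit \<beta> X j) [0..<n] = take n (stage \<beta> X m j)"
  by (intro nth_equalityI) (auto simp: limit_eq_nth)

lemma limit_erased_run:
  assumes "i < k * gap (\<beta> n) j"
  shows "limit \<beta> X j (length (stage \<beta> X n j) + i) = w_eps k s ! (i mod k)"
proof -
  have "limit \<beta> X j (length (stage \<beta> X n j) + i) = stage \<beta> X (Suc n) j ! (length (stage \<beta> X n j) + i)"
    using assms by (intro limit_eq_nth) (simp add: length_extend)
  then show ?thesis
    using assms by (simp add: extend_def nth_append nth_erased_word)
qed

lemma limit_new_block:
  assumes "t < k"
  shows "limit \<beta> X j (length (stage \<beta> X n j) + k * gap (\<beta> n) j + t) = new_block (\<beta> n) (stage \<beta> X n) j ! t"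
proof -
  have "limit \<beta> X j (length (stage \<beta> X n j) + k * gap (\<beta> n) j + t)
      = stage \<beta> X (Suc n) j ! (length (stage \<beta> X n j) + k * gap (\<beta> n) j + t)"
    using assms by (intro limit_eq_nth) (simp add: length_extend)
  then show ?thesis
    by (simp add: extend_def nth_append)
qed

lemma limit_infinitely_many_ones: "\<exists>\<^sub>\<infinity>i. limit \<beta> X j i"
  unfolding INFM_nat
proof
  fix m
  let ?L = "length (stage \<beta> X (Suc m) j)"
  have L: "m < ?L"
    using length_stage[of X j "Suc m" \<beta>] by simp
  have "0 < gap (\<beta> (Suc m)) j"
    using image_bound_pos by (simp add: gap_def)
  then have run: "limit \<beta> X j (?L + t) = w_eps k s ! t" if "t < k" for t
    using limit_erased_run[of t \<beta> "Suc m" j X] that by (simp add: less_le_trans)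
  show "\<exists>i>m. limit \<beta> X j i"
  proof (cases "\<exists>t<k. w_eps k s ! t")
    case True
    then show ?thesis
      using run L by (metis trans_less_add1)
  next
    case False
    let ?b = "new_block (\<beta> (Suc m)) (stage \<beta> X (Suc m)) j"
    have "\<exists>t<k. ?b ! t"
      using False new_block_differs by blast
    then show ?thesis
      using limit_new_block L by (metis add.assoc trans_less_add1)
  qed
qed

lemma limit_ne_w_eps_periodic:
  assumes "k dvd length (X j)"
  shows "limit \<beta> X j \<noteq> (\<lambda>i. w_eps k s ! (i mod k))"
proof
  assume periodic: "limit \<beta> X j = (\<lambda>i. w_eps k s ! (i mod k))"
  let ?q = "length (X j) + k * gap (\<beta> 0) j"
  have "new_block (\<beta> 0) X j ! t = w_eps k s ! t" if "t < k" for t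
  proof -
    have "(?q + t) mod k = t"
      using assms that by (simp add: mod_add_left_eq[symmetric])
    then show ?thesis
      using limit_new_block[OF that, of \<beta> X j 0] periodic by (simp add: add.assoc)
  qed
  then show False
    using new_block_differs by blast
qed

lemma concat_val_sigma_limit:
  assumes "cyclic_chain X" "j < p"
  shows "concat_val (sigma_inf k s (limit \<beta> X (Suc j mod p))) = bin_val (limit \<beta> X j)"
proof (rule concat_val_eq_bin_val)
  let ?j' = "Suc j mod p"
  let ?U = "sigma_inf k s (limit \<beta> X ?j')"
  have image_stage: "concat (map ?U [0..<n]) = \<sigma> (take n (stage \<beta> X m ?j'))"
    if "n \<le> length (stage \<beta> X m ?j')" for n m
    unfolding concat_sigma_inf using map_limit[OF that] by simp
  fix n i
  assume i: "i < length (concat (map ?U [0..<n]))"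
  have "n \<le> length (stage \<beta> X n ?j')"
    using length_stage[of X ?j' n \<beta>] by simp
  then obtain t where t: "\<sigma> (stage \<beta> X n ?j') = concat (map ?U [0..<n]) @ t"
    using image_stage sigma_word_take_prefix by metis
  obtain r where "stage \<beta> X n j = \<sigma> (stage \<beta> X n ?j') @ r"
    using cyclic_chain_stage[OF assms(1)] assms(2) unfolding cyclic_chain_def by blast
  then have "stage \<beta> X n j = concat (map ?U [0..<n]) @ t @ r"
    using t by simp
  then show "concat (map ?U [0..<n]) ! i = limit \<beta> X j i"
    using i limit_eq_nth[of i \<beta> X n j] by (simp add: nth_append)
next
  let ?j' = "Suc j mod p"
  fix N
  let ?n = "length (stage \<beta> X N ?j')"
  have "concat (map (sigma_inf k s (limit \<beta> X ?j')) [0..<?n]) = \<sigma> (stage \<beta> X N ?j')"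
    unfolding concat_sigma_inf using map_limit[of ?n \<beta> X N ?j'] by simp
  then show "\<exists>n. N \<le> length (concat (map (sigma_inf k s (limit \<beta> X ?j')) [0..<n]))"
    using length_sigma_stage[OF assms(1), of ?j' N \<beta>] p_pos by (metis mod_less_divisor)
qed

lemma f_sigma_limit:
  assumes "cyclic_chain X" "j < p"
  shows "f_sigma k s (bin_val (limit \<beta> X (Suc j mod p))) = bin_val (limit \<beta> X j)"
proof -
  let ?w = "limit \<beta> X (Suc j mod p)"
  have "k dvd length (X (Suc j mod p))"
    using assms(1) p_pos by (simp add: cyclic_chain_def)
  then have "?w \<noteq> (\<lambda>i. w_eps k s ! (i mod k))"
    by (rule limit_ne_w_eps_periodic)
  moreover have "tilde (bin_val ?w) = ?w"
    by (rule tilde_bin_val[OF limit_infinitely_many_ones])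
  moreover have "0 < bin_val ?w"
    using limit_infinitely_many_ones[of \<beta> X "Suc j mod p"] bin_val_pos
    unfolding INFM_nat by blast
  ultimately have "f_sigma k s (bin_val ?w) = concat_val (sigma_inf k s ?w)"
    unfolding f_sigma_def using bin_val_le_one[of ?w] by simp
  then show ?thesis
    using concat_val_sigma_limit[OF assms] by simp
qed

lemma funpow_f_sigma_limit:
  assumes "cyclic_chain X" "q \<le> p"
  shows "(f_sigma k s ^^ q) (bin_val (limit \<beta> X 0)) = bin_val (limit \<beta> X ((p - q) mod p))"
  using funpow_cycle[where f = "f_sigma k s" and x = "\<lambda>j. bin_val (limit \<beta> X j)",
      OF p_pos f_sigma_limit[OF assms(1)], of q "p - q"] assms(2)
  by simp

lemma stage_eq_if_eq_below: "(\<And>m. m < n \<Longrightarrow> \<beta> m = \<delta> m) \<Longrightarrow> stage \<beta> X n = stage \<delta> X n"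
  by (induction n) simp_all

lemma limit_separates_choices:
  assumes "\<beta> n" "\<not> \<delta> n" "stage \<beta> X n = stage \<delta> X n"
  shows "limit \<beta> X 0 \<noteq> limit \<delta> X 0"
proof
  assume eq: "limit \<beta> X 0 = limit \<delta> X 0"
  let ?q = "length (stage \<delta> X n 0) + k * image_bound k s"
  have "new_block (\<delta> n) (stage \<delta> X n) 0 ! t = w_eps k s ! t" if "t < k" for t
  proof -
    have "limit \<beta> X 0 (length (stage \<beta> X n 0) + (k * image_bound k s + t)) = w_eps k s ! t"
      using limit_erased_run[of "k * image_bound k s + t" \<beta> n 0 X] assms(1) that
      by (simp add: gap_def)
    moreover have "limit \<delta> X 0 (?q + t) = new_block (\<delta> n) (stage \<delta> X n) 0 ! t"
      using limit_new_block[OF that, of \<delta> X 0 n] assms(2) by (simp add: gap_def)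
    ultimately show ?thesis
      using eq assms(3) by (simp add: add.assoc)
  qed
  then show False
    using new_block_differs by blast
qed

lemma inj_limit: "inj (\<lambda>\<beta>. limit \<beta> X 0)"
proof
  fix \<beta> \<delta>
  assume eq: "limit \<beta> X 0 = limit \<delta> X 0"
  show "\<beta> = \<delta>"
  proof (rule ccontr)
    assume "\<beta> \<noteq> \<delta>"
    then obtain n where n: "\<beta> n \<noteq> \<delta> n" "\<forall>m<n. \<beta> m = \<delta> m"
      using exists_least_iff[of "\<lambda>n. \<beta> n \<noteq> \<delta> n"] by (auto simp: fun_eq_iff)
    then have "stage \<beta> X n = stage \<delta> X n"
      by (intro stage_eq_if_eq_below) auto
    then show False
      using limit_separates_choices[of \<beta> n \<delta> X] limit_separates_choices[of \<delta> n \<beta> X] n(1) eq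
      by (cases "\<beta> n") auto
  qed
qed

text \<open>Word \<open>0\<close> reaches its first non-erased block after at most \<open>image_bound k s + 1\<close> blocks,
  while word \<open>j > 0\<close> starts with \<open>2 j + image_bound k s\<close> erased blocks.\<close>

lemma limit_differs_from_limit_0:
  assumes "0 < j" "j < p"
  shows "limit \<beta> (\<lambda>j. erased_word (2 * j)) j \<noteq> limit \<beta> (\<lambda>j. erased_word (2 * j)) 0"
proof
  let ?X = "\<lambda>j. erased_word (2 * j)"
  assume eq: "limit \<beta> ?X j = limit \<beta> ?X 0"
  have "new_block (\<beta> 0) ?X 0 ! t = w_eps k s ! t" if "t < k" for t
  proof -
    let ?i = "k * gap (\<beta> 0) 0 + t"
    have "limit \<beta> ?X 0 ?i = new_block (\<beta> 0) ?X 0 ! t"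
      using limit_new_block[OF that, of \<beta> ?X 0 0] by simp
    have "stage \<beta> ?X 1 j = erased_word (2 * j + image_bound k s) @ new_block (\<beta> 0) ?X j"
      using assms(1) by (simp add: extend_def gap_def erased_word_add)
    moreover have "?i < k * (2 * j + image_bound k s)"
    proof -
      have "?i < k * Suc (gap (\<beta> 0) 0)"
        using that by simp
      also have "\<dots> \<le> k * (2 * j + image_bound k s)"
        using assms(1) by (intro mult_le_mono2) (simp add: gap_def)
      finally show ?thesis .
    qed
    ultimately have "limit \<beta> ?X j ?i = w_eps k s ! t"
      using limit_eq_nth[of ?i \<beta> ?X 1 j] that by (simp add: nth_append nth_erased_word)
    then show ?thesis
      using eq \<open>limit \<beta> ?X 0 ?i = new_block (\<beta> 0) ?X 0 ! t\<close> by simp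
  qed
  then show False
    using new_block_differs by blast
qed

theorem uncountable_periodic_points: "uncountable (periodic_points (f_sigma k s) p)"
proof
  assume countable: "countable (periodic_points (f_sigma k s) p)"
  define X where "X = (\<lambda>j. erased_word (2 * j))"
  have chain: "cyclic_chain X"
    unfolding cyclic_chain_def X_def by simp
  define x where "x \<beta> = bin_val (limit \<beta> X 0)" for \<beta>
  have limit_inj: "bin_val (limit \<beta> X j) = bin_val (limit \<delta> X j') \<Longrightarrow> limit \<beta> X j = limit \<delta> X j'"
    for \<beta> \<delta> j j'
    using bin_val_inj limit_infinitely_many_ones by blast
  have "x \<beta> \<in> periodic_points (f_sigma k s) p" for \<beta>
    unfolding periodic_points_def
  proof (intro CollectI conjI allI impI)
    show "x \<beta> \<in> {0..1}"
      using bin_val_nonneg bin_val_le_one by (simp add: x_def)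
    show "(f_sigma k s ^^ p) (x \<beta>) = x \<beta>"
      using funpow_f_sigma_limit[OF chain, of p \<beta>] by (simp add: x_def)
    fix q
    assume q: "0 < q \<and> q < p"
    then have "limit \<beta> X (p - q) \<noteq> limit \<beta> X 0"
      using limit_differs_from_limit_0[of "p - q" \<beta>] by (simp add: X_def)
    then show "(f_sigma k s ^^ q) (x \<beta>) \<noteq> x \<beta>"
      using funpow_f_sigma_limit[OF chain, of q \<beta>] q limit_inj by (auto simp: x_def)
  qed
  moreover have "inj x"
    using inj_limit limit_inj unfolding inj_def x_def by blast
  ultimately have "countable (UNIV :: (nat \<Rightarrow> bool) set)"
    using countable by (metis countable_image_inj_on countable_subset image_subsetI)
  then show False
    using uncountable_UNIV_nat_bool by blast
qed

lemma cyclic_chain_iterates: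
  assumes "k dvd length u" "(\<sigma> ^^ p) u = []"
  shows "cyclic_chain (\<lambda>j. if j = 0 then u else pad ((\<sigma> ^^ (p - j)) u))"
    (is "cyclic_chain ?X")
proof -
  have image: "\<sigma> (?X (Suc j mod p)) = (\<sigma> ^^ (p - j)) u" if "j < p" for j
  proof (cases "Suc j < p")
    case True
    then have "p - j = Suc (p - Suc j)"
      by simp
    then show ?thesis
      using True by (simp add: sigma_pad)
  next
    case False
    then have "Suc j = p"
      using that by simp
    then have "Suc j mod p = 0" "p - j = 1"
      by simp_all
    then show ?thesis
      by simp
  qed
  show ?thesis
    unfolding cyclic_chain_def
  proof (intro allI impI conjI)
    fix j
    assume j: "j < p"
    show "k dvd length (?X j)"
      using assms(1) k_dvd_length_pad by simp
    show "\<exists>r. ?X j = \<sigma> (?X (Suc j mod p)) @ r"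
      using image[OF j] assms(2) by (simp add: pad_def)
  qed
qed

lemma periodic_point_extending:
  assumes "k dvd length u" "(\<sigma> ^^ p) u = []"
  shows "\<exists>w. (f_sigma k s ^^ p) (bin_val w) = bin_val w \<and> map w [0..<length u] = u"
proof -
  let ?X = "\<lambda>j. if j = 0 then u else pad ((\<sigma> ^^ (p - j)) u)"
  let ?w = "limit (\<lambda>_. False) ?X 0"
  have "(f_sigma k s ^^ p) (bin_val ?w) = bin_val ?w"
    using funpow_f_sigma_limit[OF cyclic_chain_iterates[OF assms], of p] by simp
  moreover have "map ?w [0..<length u] = u"
    using map_limit[of "length u" "\<lambda>_. False" ?X 0 0] by simp
  ultimately show ?thesis
    by blast
qed

end

theorem (in optimal_erasing_substitution) periodic_points_dense:
  assumes "\<forall>u. \<exists>n. (\<sigma> ^^ n) u = []"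
  shows "{0..1} \<subseteq> closure (\<Union>p\<in>{1..}. periodic_points (f_sigma k s) p)"
proof
  fix y :: real
  assume y: "y \<in> {0..1}"
  show "y \<in> closure (\<Union>p\<in>{1..}. periodic_points (f_sigma k s) p)"
    unfolding closure_approachable
  proof (intro allI impI)
    fix e :: real
    assume "0 < e"
    then obtain M where M: "(1/2::real) ^ M < e"
      using real_arch_pow_inv[of e "1/2"] by auto
    let ?N = "k * M"
    have "(1/2::real) ^ ?N \<le> (1/2) ^ M"
      using k_pos by (intro power_decreasing) auto
    then have N: "(1/2::real) ^ ?N < e"
      using M by linarith
    obtain u where u: "length u = ?N" "fin_val u \<le> y" "y \<le> fin_val u + (1/2) ^ ?N"
      using fin_val_approx[of y ?N] y by auto
    obtain n where "(\<sigma> ^^ n) u = []"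
      using assms by blast
    then have erased: "(\<sigma> ^^ Suc n) u = []"
      by simp
    interpret periodic_orbit_construction k s "Suc n"
      by unfold_locales simp
    obtain w where w: "(f_sigma k s ^^ Suc n) (bin_val w) = bin_val w" "map w [0..<?N] = u"
      using periodic_point_extending[OF _ erased] u(1) by auto
    have "dist (bin_val w) y < e"
      using dist_bin_val_le[OF w(2) u(2,3)] N by linarith
    moreover have "bin_val w \<in> (\<Union>p\<in>{1..}. periodic_points (f_sigma k s) p)"
      using w(1) bin_val_nonneg bin_val_le_one by (intro periodic_points_least_period) auto
    ultimately show "\<exists>x\<in>\<Union>p\<in>{1..}. periodic_points (f_sigma k s) p. dist x y < e"
      by blast
  qed
qed

theorem lemma4p6:
  fixes k :: nat and s :: "nat \<Rightarrow> bool \<Rightarrow> bool list"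
  assumes "k \<ge> 2"
    and "completely_erasing k s"
    and "w_eps k s \<noteq> replicate k True"
    and "optimal k s"
  shows "(\<forall>p \<ge> 1. \<not> countable (periodic_points (f_sigma k s) p))
       \<and> {0..1} \<subseteq> closure (\<Union>p \<in> {1..}. periodic_points (f_sigma k s) p)"
proof -
  interpret optimal_erasing_substitution k s
    using assms(1,2,4) by unfold_locales (auto simp: completely_erasing_def)
  have "uncountable (periodic_points (f_sigma k s) p)" if "p \<ge> 1" for p
  proof -
    interpret periodic_orbit_construction k s p
      using that by unfold_locales simp
    show ?thesis
      by (rule uncountable_periodic_points)
  qed
  moreover have "{0..1} \<subseteq> closure (\<Union>p \<in> {1..}. periodic_points (f_sigma k s) p)"
    using assms(2) by (intro periodic_points_dense) (simp add: completely_erasing_def)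
  ultimately show ?thesis
    by blast
qed

end
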